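(* Consider the RHC closed-loop system described in the context. Assume that $A$ is Schur stable, i.e. all eigenvalues of $A$ have modulus strictly less than $1$. Assume also that $\mathbb{E}\bigl[\bar\varphi(\bar F\bar w)\bigr]=0$ for every initial condition. Then the closed loop satisfies $$\sup_{t\in\mathbb{N}_0}\mathbb{E}_{x_0}\bigl[\|x_t\|^2\bigr]<\infty.$$
   Context: **System.** Consider the discrete-time system $x_{t+1}=Ax_t+Bu_t+Fw_t+r$ for $t\in\mathbb{N}_0$. The data are: - $x_t\in\mathbb{R}^n$, $u_t\in\mathbb{R}^m$ and $w_t\in\mathbb{R}^n$; - known matrices $A$, $B$, $F$ and a known vector $r$; - a given initial state $x_0$; - i.i.d. noise vectors $w_t$, possibly with unbounded support, with mean $\mu_w$ and finite covariance $\Sigma_w$; - the input constraint $\|u_t\|_\infty\le U_{\max}$, where $U_{\max}>0$. **Stacked notation.** Fix a horizon $N\in\mathbb{N}$. Define - $\bar x=(x_0^\mathsf{T},\dots,x_N^\mathsf{T})^\mathsf{T}$, $\bar u=(u_0^\mathsf{T},\dots,u_{N-1}^\mathsf{T})^\mathsf{T}$, $\bar w=(w_0^\mathsf{T},\dots,w_{N-1}^\mathsf{T})^\mathsf{T}$, and $\bar r=(r^\mathsf{T},\dots,r^\mathsf{T})^\mathsf{T}\in\mathbb{R}^{Nn}$; - $\bar F=\operatorname{diag}(F,\dots,F)$ and $\bar A=(I,A^\mathsf{T},\dots,(A^N)^\mathsf{T})^\mathsf{T}$; - $\bar B$ is the block matrix with blocks $A^{k-1-j}B$ for $j<k$ and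 $0$ otherwise ($k=0,\dots,N$, $j=0,\dots,N-1$); - $\bar D$ is the block matrix with blocks $A^{k-1-j}$ for $j<k$ and $0$ otherwise. Then $\bar x=\bar Ax_0+\bar B\bar u+\bar D\bar F\bar w+\bar D\bar r$. Let $Q_0,\dots,Q_N$ and $R_0,\dots,R_{N-1}$ be symmetric positive definite, and set $\bar Q=\operatorname{diag}(Q_0,\dots,Q_N)$ and $\bar R=\operatorname{diag}(R_0,\dots,R_{N-1})$. **Saturated noise measurements.** Let $0<\phi_{\max}\le U_{\max}$, and let $\varphi_i^j:\mathbb{R}\to\mathbb{R}$ ($i=0,\dots,N-1$, $j=1,\dots,n$) be functions bounded in absolute value by $\phi_{\max}$. Set $\varphi_i(Fw_i)=(\varphi_i^1(F_1w_i),\dots,\varphi_i^n(F_nw_i))^\mathsf{T}$, with $F_j$ the $j$-th row of $F$, and $\bar\varphi(\bar F\bar w)=(\varphi_0(Fw_0)^\mathsf{T},\dots,\varphi_{N-1}(Fw_{N-1})^\mathsf{T})^\mathsf{T}$. **Finite-horizon problem.** For a given initial state $x$, the finite-horizon problem is to minimize $\mathbb{E}_{x}[\bar x^\mathsf{T}\bar Q\bar x+\bar u^\mathsf{T}\bar R\bar u]$, with $x_0=x$, over policies $\bar u=\bar G\bar\varphi(\bar F\bar w)+\bar d$. Here $\bar d\in\mathbb{R}^{Nm}$, and $\bar G\in\mathbb{R}^{Nm\times Nn}$ is strictly block lower triangular with $m\times n$ blocks $G_{t,i}$ ($i<t$). The constraint is $|\bar d_i|+\|\bar G_i\|_1\phi_{\max}\le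 U_{\max}$ for $i=1,\dots,Nm$, where $\bar G_i$ is the $i$-th row of $\bar G$. **RHC closed loop.** At each time $kN$ ($k\in\mathbb{N}_0$), the finite-horizon problem is solved with initial state $x_{kN}$, giving an optimal solution $(\bar G^*_{kN},\bar d^*_{kN})$ that depends on $x_{kN}$. The whole resulting input sequence is then applied over the next $N$ steps. That is, for $\ell=0,\dots,N-1$, $$(u_{kN}^\mathsf{T},\dots,u_{kN+N-1}^\mathsf{T})^\mathsf{T}=\bar G^*_{kN}\,\bar\varphi\bigl(\bar F\,(w_{kN}^\mathsf{T},\dots,w_{kN+N-1}^\mathsf{T})^\mathsf{T}\bigr)+\bar d^*_{kN},$$ and the state evolves by $x_{t+1}=Ax_t+Bu_t+Fw_t+r$. *)

theory Defs
  imports "HOL-Probability.Probability"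
begin

text \<open>Eigenvalues of a real square matrix are taken over the complex numbers:
  c is an eigenvalue of A iff A v = c v for some nonzero complex vector v.\<close>
definition schur_stable :: "real^'n^'n \<Rightarrow> bool" where
  "schur_stable A \<longleftrightarrow>
     (\<forall>(c::complex) (v::complex^'n). v \<noteq> 0 \<and>
        (\<chi> i. \<Sum>j\<in>UNIV. complex_of_real (A$i$j) * v$j) = c *s v \<longrightarrow> cmod c < 1)"

definition sym_pos_def :: "real^'n^'n \<Rightarrow> bool" where
  "sym_pos_def Q \<longleftrightarrow> transpose Q = Q \<and> (\<forall>v. v \<noteq> 0 \<longrightarrow> v \<bullet> (Q *v v) > 0)"

definition phi_vec ::
  "(nat \<Rightarrow> 'n \<Rightarrow> real \<Rightarrow> real) \<Rightarrow> real^'n^'n \<Rightarrow> nat \<Rightarrow> real^'n \<Rightarrow> real^'n" where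
  "phi_vec \<phi> F i wv = (\<chi> j. \<phi> i j ((F *v wv) $ j))"

text \<open>Input at step l of a horizon under the policy u = G phi(F w) + d, where
  G l i is the (l,i) block of the strictly block lower triangular gain
  (only blocks with i < l are used) and ws i is the i-th noise of the horizon.\<close>
definition pol_input ::
  "(nat \<Rightarrow> 'n \<Rightarrow> real \<Rightarrow> real) \<Rightarrow> real^'n^'n \<Rightarrow> (nat \<Rightarrow> nat \<Rightarrow> real^'n^'m) \<Rightarrow>
   (nat \<Rightarrow> real^'m) \<Rightarrow> (nat \<Rightarrow> real^'n) \<Rightarrow> nat \<Rightarrow> real^'m" where
  "pol_input \<phi> F G d ws l = (\<Sum>i<l. G l i *v phi_vec \<phi> F i (ws i)) + d l"

fun traj ::
  "real^'n^'n \<Rightarrow> real^'m^'n \<Rightarrow> real^'n^'n \<Rightarrow> real^'n \<Rightarrow> (nat \<Rightarrow> 'n \<Rightarrow> real \<Rightarrow> real) \<Rightarrow>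
   (nat \<Rightarrow> nat \<Rightarrow> real^'n^'m) \<Rightarrow> (nat \<Rightarrow> real^'m) \<Rightarrow> real^'n \<Rightarrow> (nat \<Rightarrow> real^'n) \<Rightarrow>
   nat \<Rightarrow> real^'n" where
  "traj A B F r \<phi> G d x ws 0 = x"
| "traj A B F r \<phi> G d x ws (Suc l) =
     A *v traj A B F r \<phi> G d x ws l + B *v pol_input \<phi> F G d ws l + F *v ws l + r"

definition admissible ::
  "nat \<Rightarrow> real \<Rightarrow> real \<Rightarrow> (nat \<Rightarrow> nat \<Rightarrow> real^'n^'m) \<Rightarrow> (nat \<Rightarrow> real^'m) \<Rightarrow> bool" where
  "admissible N \<phi>max Umax G d \<longleftrightarrow>
     (\<forall>l<N. \<forall>j. \<bar>d l $ j\<bar> + (\<Sum>i<l. \<Sum>k\<in>UNIV. \<bar>G l i $ j $ k\<bar>) * \<phi>max \<le> Umax)"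

definition fh_cost ::
  "'a measure \<Rightarrow> (nat \<Rightarrow> 'a \<Rightarrow> real^'n) \<Rightarrow> nat \<Rightarrow>
   real^'n^'n \<Rightarrow> real^'m^'n \<Rightarrow> real^'n^'n \<Rightarrow> real^'n \<Rightarrow> (nat \<Rightarrow> 'n \<Rightarrow> real \<Rightarrow> real) \<Rightarrow>
   (nat \<Rightarrow> real^'n^'n) \<Rightarrow> (nat \<Rightarrow> real^'m^'m) \<Rightarrow>
   real^'n \<Rightarrow> (nat \<Rightarrow> nat \<Rightarrow> real^'n^'m) \<Rightarrow> (nat \<Rightarrow> real^'m) \<Rightarrow> real" where
  "fh_cost M w N A B F r \<phi> Q R x G d =
     (\<integral>\<omega>. (\<Sum>k\<le>N. traj A B F r \<phi> G d x (\<lambda>i. w i \<omega>) k \<bullet>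
                    (Q k *v traj A B F r \<phi> G d x (\<lambda>i. w i \<omega>) k))
          + (\<Sum>k<N. pol_input \<phi> F G d (\<lambda>i. w i \<omega>) k \<bullet>
                    (R k *v pol_input \<phi> F G d (\<lambda>i. w i \<omega>) k)) \<partial>M)"

definition fh_optimal where
  "fh_optimal M w N A B F r \<phi> Q R \<phi>max Umax x G d \<longleftrightarrow>
     admissible N \<phi>max Umax G d \<and>
     (\<forall>G' d'. admissible N \<phi>max Umax G' d' \<longrightarrow>
        fh_cost M w N A B F r \<phi> Q R x G d \<le> fh_cost M w N A B F r \<phi> Q R x G' d')"

text \<open>RHC closed loop. sel x = (G*, d*) is the chosen optimal solution for
  initial state x. Block-start states (times kN):\<close>
fun rhc_block ::
  "nat \<Rightarrow> real^'n^'n \<Rightarrow> real^'m^'n \<Rightarrow> real^'n^'n \<Rightarrow> real^'n \<Rightarrow> (nat \<Rightarrow> 'n \<Rightarrow> real \<Rightarrow> real) \<Rightarrow>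
   (real^'n \<Rightarrow> (nat \<Rightarrow> nat \<Rightarrow> real^'n^'m) \<times> (nat \<Rightarrow> real^'m)) \<Rightarrow> real^'n \<Rightarrow>
   (nat \<Rightarrow> real^'n) \<Rightarrow> nat \<Rightarrow> real^'n" where
  "rhc_block N A B F r \<phi> sel x0 ws 0 = x0"
| "rhc_block N A B F r \<phi> sel x0 ws (Suc k) =
     (let xk = rhc_block N A B F r \<phi> sel x0 ws k
      in traj A B F r \<phi> (fst (sel xk)) (snd (sel xk)) xk (\<lambda>i. ws (k * N + i)) N)"

definition rhc_state ::
  "nat \<Rightarrow> real^'n^'n \<Rightarrow> real^'m^'n \<Rightarrow> real^'n^'n \<Rightarrow> real^'n \<Rightarrow> (nat \<Rightarrow> 'n \<Rightarrow> real \<Rightarrow> real) \<Rightarrow>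
   (real^'n \<Rightarrow> (nat \<Rightarrow> nat \<Rightarrow> real^'n^'m) \<times> (nat \<Rightarrow> real^'m)) \<Rightarrow> real^'n \<Rightarrow>
   (nat \<Rightarrow> real^'n) \<Rightarrow> nat \<Rightarrow> real^'n" where
  "rhc_state N A B F r \<phi> sel x0 ws t =
     (let k = t div N; xk = rhc_block N A B F r \<phi> sel x0 ws k
      in traj A B F r \<phi> (fst (sel xk)) (snd (sel xk)) xk (\<lambda>i. ws (k * N + i)) (t mod N))"

end

theory Submission
  imports Defs "Jordan_Normal_Form.Spectral_Radius"
begin

text \<open>Every admissible policy keeps each input component in [-U_max, U_max], so the closed
  loop is the linear system x_{t+1} = A x_t + v_t driven by v_t = B u_t + F w_t + r, where
  B u_t + r is bounded and F w_t is proportional to the noise.  Schur stability gives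
  |A^k y| \<le> c \<rho>^k |y| for some \<rho> < 1: the powers of A/\<rho> stay bounded because its spectral
  radius is below 1.  Variation of constants then bounds |x_t| by a constant plus a multiple of
  the geometric convolution \<Sum>_{s<t} \<rho>^(t-1-s) |w_s|, and Cauchy-Schwarz bounds |x_t|^2 by a
  constant plus a multiple of \<Sum>_{s<t} \<rho>^(t-1-s) |w_s|^2, whose expectation is at most
  E|w_0|^2 / (1 - \<rho>).\<close>

text \<open>The Jordan normal form library takes over $ for its own vectors; give it back to
  Finite_Cartesian_Product.\<close>

no_notation Matrix.vec_index (infixl "$" 100)
notation Matrix.vec_index (infixl "$v" 100)

subsection \<open>Linear recurrences with a decaying transition matrix\<close>

fun matpow :: "'a::semiring_1^'n^'n \<Rightarrow> nat \<Rightarrow> 'a^'n^'n" where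
  "matpow A 0 = Finite_Cartesian_Product.mat 1"
| "matpow A (Suc k) = matpow A k ** A"

lemma matpow_Suc_left: "matpow A (Suc k) = A ** matpow A k"
proof (induction k)
  case (Suc k)
  then show ?case by (metis matpow.simps(2) matrix_mul_assoc)
qed simp

lemma matrix_vector_mult_sum: "(A::real^'a^'b) *v (\<Sum>s\<in>S. f s) = (\<Sum>s\<in>S. A *v f s)"
  using linear_sum[OF matrix_vector_mul_linear[of A]] by simp

lemma linear_recurrence_closed_form:
  fixes x v :: "nat \<Rightarrow> real^'n"
  assumes rec: "\<And>t. x (Suc t) = A *v x t + v t"
  shows "x t = matpow A t *v x 0 + (\<Sum>s<t. matpow A (t - Suc s) *v v s)"
proof (induction t)
  case 0
  then show ?case by simp
next
  case (Suc t)
  have "(\<Sum>s<t. A *v (matpow A (t - Suc s) *v v s)) = (\<Sum>s<t. matpow A (Suc t - Suc s) *v v s)"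
  proof (intro sum.cong)
    fix s assume "s \<in> {..<t}"
    hence "Suc t - Suc s = Suc (t - Suc s)" by simp
    thus "A *v (matpow A (t - Suc s) *v v s) = matpow A (Suc t - Suc s) *v v s"
      by (simp only: matpow_Suc_left matrix_vector_mul_assoc)
  qed simp
  with Suc show ?case
    by (simp add: rec matrix_vector_right_distrib matrix_vector_mult_sum matrix_vector_mul_assoc
        matpow_Suc_left add.assoc del: matpow.simps(2))
qed

lemma sum_geometric_tail_le:
  fixes \<rho> :: real
  assumes "0 \<le> \<rho>" "\<rho> < 1"
  shows "(\<Sum>s<t. \<rho> ^ (t - Suc s)) \<le> 1 / (1 - \<rho>)"
proof -
  have "(\<Sum>s<t. \<rho> ^ (t - Suc s)) = (\<Sum>s<t. \<rho> ^ s)" by (rule sum.nat_diff_reindex)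
  also have "\<dots> = (1 - \<rho> ^ t) / (1 - \<rho>)" using assms by (simp add: sum_gp_strict)
  also have "\<dots> \<le> 1 / (1 - \<rho>)" using assms by (simp add: divide_right_mono)
  finally show ?thesis .
qed

lemma geometric_convolution_square_le:
  fixes \<rho> :: real and y :: "nat \<Rightarrow> real"
  assumes \<rho>: "0 \<le> \<rho>" "\<rho> < 1"
  shows "(\<Sum>s<t. \<rho> ^ (t - Suc s) * y s)\<^sup>2 \<le> (\<Sum>s<t. \<rho> ^ (t - Suc s) * (y s)\<^sup>2) / (1 - \<rho>)"
proof -
  let ?b = "\<lambda>s. \<rho> ^ (t - Suc s)"
  have "(\<Sum>s<t. ?b s * y s)\<^sup>2 = (\<Sum>s<t. sqrt (?b s) * (sqrt (?b s) * y s))\<^sup>2"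
    using \<rho> by (simp add: mult.assoc[symmetric])
  also have "\<dots> \<le> (\<Sum>s<t. (sqrt (?b s))\<^sup>2) * (\<Sum>s<t. (sqrt (?b s) * y s)\<^sup>2)"
    by (rule Cauchy_Schwarz_ineq_sum)
  also have "\<dots> = (\<Sum>s<t. ?b s) * (\<Sum>s<t. ?b s * (y s)\<^sup>2)"
    using \<rho> by (simp add: power_mult_distrib)
  also have "\<dots> \<le> 1 / (1 - \<rho>) * (\<Sum>s<t. ?b s * (y s)\<^sup>2)"
    using \<rho> by (intro mult_right_mono sum_geometric_tail_le sum_nonneg) simp_all
  finally show ?thesis by simp
qed

lemma linear_recurrence_norm_le:
  fixes x v :: "nat \<Rightarrow> real^'n" and e :: "nat \<Rightarrow> real"
  assumes rec: "\<And>t. x (Suc t) = A *v x t + v t"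
    and decay: "\<And>k y. norm (matpow A k *v y) \<le> c * \<rho> ^ k * norm y"
    and v: "\<And>t. norm (v t) \<le> K + L * e t"
    and c: "0 \<le> c" and \<rho>: "0 \<le> \<rho>" "\<rho> < 1" and K: "0 \<le> K"
  shows "norm (x t) \<le> c * norm (x 0) + c * K / (1 - \<rho>) + c * L * (\<Sum>s<t. \<rho> ^ (t - Suc s) * e s)"
proof -
  have "norm (x t) \<le> norm (matpow A t *v x 0) + (\<Sum>s<t. norm (matpow A (t - Suc s) *v v s))"
    unfolding linear_recurrence_closed_form[of x A v t, OF rec]
    by (rule order_trans[OF norm_triangle_ineq add_left_mono[OF norm_sum]])
  also have "\<dots> \<le> c * \<rho> ^ t * norm (x 0) + (\<Sum>s<t. c * \<rho> ^ (t - Suc s) * (K + L * e s))"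
  proof (intro add_mono sum_mono)
    fix s
    have "norm (matpow A (t - Suc s) *v v s) \<le> c * \<rho> ^ (t - Suc s) * norm (v s)" by (rule decay)
    also have "\<dots> \<le> c * \<rho> ^ (t - Suc s) * (K + L * e s)"
      using c \<rho> by (intro mult_left_mono v) simp_all
    finally show "norm (matpow A (t - Suc s) *v v s) \<le> c * \<rho> ^ (t - Suc s) * (K + L * e s)" .
  qed (rule decay)
  also have "\<dots> = c * \<rho> ^ t * norm (x 0) + c * K * (\<Sum>s<t. \<rho> ^ (t - Suc s))
      + c * L * (\<Sum>s<t. \<rho> ^ (t - Suc s) * e s)"
    by (simp add: algebra_simps sum.distrib sum_distrib_left)
  also have "\<dots> \<le> c * norm (x 0) + c * K / (1 - \<rho>) + c * L * (\<Sum>s<t. \<rho> ^ (t - Suc s) * e s)"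
  proof -
    have "c * \<rho> ^ t * norm (x 0) \<le> c * norm (x 0)"
      using c \<rho> by (intro mult_right_mono mult_right_le_one_le power_le_one) simp_all
    moreover have "c * K * (\<Sum>s<t. \<rho> ^ (t - Suc s)) \<le> c * K * (1 / (1 - \<rho>))"
      using c K \<rho> by (intro mult_left_mono sum_geometric_tail_le) simp_all
    ultimately show ?thesis by simp
  qed
  finally show ?thesis .
qed

lemma linear_recurrence_sq_norm_le:
  fixes x v :: "nat \<Rightarrow> real^'n" and e :: "nat \<Rightarrow> real"
  assumes rec: "\<And>t. x (Suc t) = A *v x t + v t"
    and decay: "\<And>k y. norm (matpow A k *v y) \<le> c * \<rho> ^ k * norm y"
    and v: "\<And>t. norm (v t) \<le> K + L * e t"
    and c: "0 \<le> c" and \<rho>: "0 \<le> \<rho>" "\<rho> < 1" and K: "0 \<le> K"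
  shows "(norm (x t))\<^sup>2 \<le> 2 * (c * norm (x 0) + c * K / (1 - \<rho>))\<^sup>2
      + 2 * (c * L)\<^sup>2 / (1 - \<rho>) * (\<Sum>s<t. \<rho> ^ (t - Suc s) * (e s)\<^sup>2)"
proof -
  define a where "a = c * norm (x 0) + c * K / (1 - \<rho>)"
  define z where "z = (\<Sum>s<t. \<rho> ^ (t - Suc s) * e s)"
  have "norm (x t) \<le> a + c * L * z"
    unfolding a_def z_def by (rule linear_recurrence_norm_le[of x A v c \<rho> K L e, OF rec decay v c \<rho> K])
  hence "(norm (x t))\<^sup>2 \<le> (a + c * L * z)\<^sup>2" by (simp add: power_mono)
  also have "\<dots> \<le> 2 * a\<^sup>2 + 2 * (c * L)\<^sup>2 * z\<^sup>2"
    using zero_le_square[of "a - c * L * z"] by (simp add: power2_eq_square algebra_simps)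
  also have "\<dots> \<le> 2 * a\<^sup>2 + 2 * (c * L)\<^sup>2 * ((\<Sum>s<t. \<rho> ^ (t - Suc s) * (e s)\<^sup>2) / (1 - \<rho>))"
    unfolding z_def by (intro add_left_mono mult_left_mono geometric_convolution_square_le[OF \<rho>]) simp
  finally show ?thesis unfolding a_def by simp
qed

subsection \<open>Schur stability and exponential decay\<close>

lemma mat_pow_smult:
  assumes C: "(C :: 'a::comm_ring_1 mat) \<in> carrier_mat n n"
  shows "(a \<cdot>\<^sub>m C) ^\<^sub>m k = a ^ k \<cdot>\<^sub>m C ^\<^sub>m k"
proof (induction k)
  case 0
  then show ?case using C by (auto intro!: eq_matI)
next
  case (Suc k)
  have Ck: "C ^\<^sub>m k \<in> carrier_mat n n" using C by simp
  have "(a \<cdot>\<^sub>m C) ^\<^sub>m Suc k = a ^ k \<cdot>\<^sub>m (C ^\<^sub>m k * (a \<cdot>\<^sub>m C))"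
    using Suc mult_smult_assoc_mat[OF Ck, of "a \<cdot>\<^sub>m C"] C by auto
  also have "\<dots> = a ^ k \<cdot>\<^sub>m (a \<cdot>\<^sub>m (C ^\<^sub>m k * C))"
    using mult_smult_distrib[OF Ck C] by simp
  also have "\<dots> = a ^ Suc k \<cdot>\<^sub>m C ^\<^sub>m Suc k"
    by (auto intro!: eq_matI)
  finally show ?case .
qed

lemma eigenvalue_smult_mat:
  assumes C: "(C :: 'a::field mat) \<in> carrier_mat n n" and a: "a \<noteq> 0"
    and e: "eigenvalue (a \<cdot>\<^sub>m C) \<mu>"
  shows "eigenvalue C (\<mu> / a)"
proof -
  obtain v where v: "v \<in> carrier_vec n" "v \<noteq> 0\<^sub>v n" "(a \<cdot>\<^sub>m C) *\<^sub>v v = \<mu> \<cdot>\<^sub>v v"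
    using e C unfolding eigenvalue_def eigenvector_def by auto
  have "C *\<^sub>v v = (\<mu> / a) \<cdot>\<^sub>v v"
  proof (rule eq_vecI)
    fix i assume "i < dim_vec ((\<mu> / a) \<cdot>\<^sub>v v)"
    hence i: "i < n" using v by auto
    have "a * (C *\<^sub>v v) $v i = ((a \<cdot>\<^sub>m C) *\<^sub>v v) $v i"
      using i C v(1) by (auto simp: scalar_prod_def sum_distrib_left mult.assoc)
    also have "\<dots> = \<mu> * v $v i" using v i by simp
    finally show "(C *\<^sub>v v) $v i = ((\<mu> / a) \<cdot>\<^sub>v v) $v i"
      using i v a by (auto simp: field_simps)
  qed (use v C in auto)
  thus ?thesis using v C unfolding eigenvalue_def eigenvector_def by auto
qed

lemma spectral_radius_less_imp_norm_bound_mat_pow: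
  assumes C: "C \<in> carrier_mat n n" and sr: "spectral_radius C < \<rho>"
  shows "\<exists>c. \<forall>k. norm_bound (C ^\<^sub>m k) (c * \<rho> ^ k)"
proof (cases "n = 0")
  case True
  then show ?thesis using C by (auto simp: norm_bound_def)
next
  case False
  have "0 \<le> spectral_radius C"
    using spectral_radius_mem_max(1)[OF C] False by auto
  with sr have \<rho>: "0 < \<rho>" by linarith
  define a where "a = complex_of_real (1 / \<rho>)"
  have a: "a \<noteq> 0" using \<rho> unfolding a_def by simp
  have D: "a \<cdot>\<^sub>m C \<in> carrier_mat n n" using C by simp
  have "spectral_radius (a \<cdot>\<^sub>m C) < 1"
  proof -
    obtain \<mu> where \<mu>: "eigenvalue (a \<cdot>\<^sub>m C) \<mu>" "spectral_radius (a \<cdot>\<^sub>m C) = cmod \<mu>"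
      using spectral_radius_mem_max(1)[OF D] False unfolding spectrum_def by auto
    have "cmod (\<mu> / a) \<le> spectral_radius C"
      using eigenvalue_smult_mat[OF C a \<mu>(1)] spectral_radius_mem_max(2)[OF C] False
      unfolding spectrum_def by auto
    hence "cmod \<mu> * \<rho> \<le> spectral_radius C" using \<rho> unfolding a_def by (simp add: norm_mult)
    hence "cmod \<mu> * \<rho> < \<rho>" using sr by linarith
    thus ?thesis using \<mu>(2) \<rho> by (simp add: mult_less_cancel_right2)
  qed
  then obtain c where c: "\<And>k. norm_bound ((a \<cdot>\<^sub>m C) ^\<^sub>m k) c"
    using spectral_radius_jnf_norm_bound_less_1_upper_triangular[OF D] by auto
  have "norm_bound (C ^\<^sub>m k) (c * \<rho> ^ k)" for k
  proof (rule norm_boundI)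
    fix i j assume "i < dim_row (C ^\<^sub>m k)" "j < dim_col (C ^\<^sub>m k)"
    hence ij: "i < n" "j < n" using C by (auto split: if_splits)
    have "norm (a ^ k * (C ^\<^sub>m k) $$ (i, j)) \<le> c"
      using c[of k] ij C unfolding mat_pow_smult[OF C] norm_bound_def by simp
    hence "norm ((C ^\<^sub>m k) $$ (i, j)) / \<rho> ^ k \<le> c"
      using \<rho> unfolding a_def by (simp add: norm_power power_one_over norm_divide)
    thus "norm ((C ^\<^sub>m k) $$ (i, j)) \<le> c * \<rho> ^ k"
      using \<rho> by (simp add: divide_le_eq)
  qed
  thus ?thesis by blast
qed

text \<open>An enumeration h of the index type transports a matrix to the natural-number indexed
  matrices of the Jordan normal form library.\<close>

definition cmat_of :: "('n \<Rightarrow> nat) \<Rightarrow> real^'n^'n \<Rightarrow> complex mat" where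
  "cmat_of (h :: 'n \<Rightarrow> nat) A = Matrix.mat CARD('n) CARD('n)
     (\<lambda>(a, b). complex_of_real (A $ inv_into UNIV h a $ inv_into UNIV h b))"

lemma
  fixes h :: "'n::finite \<Rightarrow> nat"
  assumes h: "bij_betw h UNIV {0..<CARD('n)}"
  shows inv_enum_enum [simp]: "inv_into UNIV h (h i) = i"
    and enum_inv_enum [simp]: "a < CARD('n) \<Longrightarrow> h (inv_into UNIV h a) = a"
    and enum_less_card [simp]: "h i < CARD('n)"
    and sum_enum_reindex: "(\<Sum>b\<in>{0..<CARD('n)}. f b) = (\<Sum>j\<in>UNIV. f (h j))"
  using h sum.reindex_bij_betw[OF h, of f]
  by (auto simp: bij_betw_def bij_betw_inv_into_right[OF h])

lemma cmat_of_carrier [simp]: "cmat_of (h :: 'n::finite \<Rightarrow> nat) A \<in> carrier_mat CARD('n) CARD('n)"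
  and dim_row_cmat_of [simp]: "dim_row (cmat_of (h :: 'n::finite \<Rightarrow> nat) A) = CARD('n)"
  and dim_col_cmat_of [simp]: "dim_col (cmat_of (h :: 'n::finite \<Rightarrow> nat) A) = CARD('n)"
  by (simp_all add: cmat_of_def)

lemma cmat_of_pow_nth:
  fixes A :: "real^'n^'n"
  assumes h: "bij_betw h UNIV {0..<CARD('n)}"
  shows "(cmat_of h A ^\<^sub>m k) $$ (h i, h j) = complex_of_real (matpow A k $ i $ j)"
proof (induction k arbitrary: i j)
  case 0
  then show ?case using h by (simp add: bij_betw_def inj_eq Finite_Cartesian_Product.mat_def)
next
  case (Suc k)
  have "(cmat_of h A ^\<^sub>m Suc k) $$ (h i, h j)
      = (\<Sum>b\<in>{0..<CARD('n)}. (cmat_of h A ^\<^sub>m k) $$ (h i, b) * cmat_of h A $$ (b, h j))"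
    using h by (simp add: scalar_prod_def)
  also have "\<dots> = (\<Sum>l\<in>UNIV. complex_of_real (matpow A k $ i $ l) * complex_of_real (A $ l $ j))"
    using h Suc by (simp add: sum_enum_reindex[OF h] cmat_of_def)
  also have "\<dots> = complex_of_real (matpow A (Suc k) $ i $ j)"
    by (simp add: matrix_matrix_mult_def)
  finally show ?case .
qed

lemma eigenvalue_cmat_of:
  fixes A :: "real^'n^'n"
  assumes h: "bij_betw h UNIV {0..<CARD('n)}" and e: "eigenvalue (cmat_of h A) \<mu>"
  shows "\<exists>v::complex^'n. v \<noteq> 0 \<and> (\<chi> i. \<Sum>j\<in>UNIV. complex_of_real (A$i$j) * v$j) = \<mu> *s v"
proof -
  obtain v where v: "v \<in> carrier_vec CARD('n)" "v \<noteq> 0\<^sub>v CARD('n)" "cmat_of h A *\<^sub>v v = \<mu> \<cdot>\<^sub>v v"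
    using e unfolding eigenvalue_def eigenvector_def by auto
  define v' :: "complex^'n" where "v' = (\<chi> i. v $v h i)"
  have "v' \<noteq> 0"
  proof
    assume "v' = 0"
    hence "v $v h i = 0" for i by (metis v'_def vec_lambda_beta zero_index)
    hence "v $v a = 0" if "a < CARD('n)" for a using enum_inv_enum[OF h that] by metis
    hence "v = 0\<^sub>v CARD('n)" using v(1) by (intro eq_vecI) auto
    with v(2) show False by simp
  qed
  moreover have "(\<chi> i. \<Sum>j\<in>UNIV. complex_of_real (A$i$j) * v'$j) = \<mu> *s v'"
  proof (rule Finite_Cartesian_Product.vec_eq_iff[THEN iffD2, OF allI])
    fix i
    have "(\<Sum>j\<in>UNIV. complex_of_real (A $ i $ j) * v $v h j) = (cmat_of h A *\<^sub>v v) $v h i"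
      using v(1) h by (simp add: cmat_of_def scalar_prod_def sum_enum_reindex[OF h])
    also have "\<dots> = \<mu> * v $v h i" using v h by simp
    finally show "(\<chi> i. \<Sum>j\<in>UNIV. complex_of_real (A$i$j) * v'$j) $ i = (\<mu> *s v') $ i"
      unfolding v'_def by simp
  qed
  ultimately show ?thesis by blast
qed

lemma schur_stable_spectral_radius_less_1:
  assumes h: "bij_betw h UNIV {0..<CARD('n)}" and "schur_stable A"
  shows "spectral_radius (cmat_of h (A::real^'n^'n)) < 1"
proof -
  obtain \<mu> where \<mu>: "eigenvalue (cmat_of h A) \<mu>" "spectral_radius (cmat_of h A) = cmod \<mu>"
    using spectral_radius_mem_max(1)[OF cmat_of_carrier] unfolding spectrum_def by auto
  then obtain v :: "complex^'n"
    where "v \<noteq> 0" "(\<chi> i. \<Sum>j\<in>UNIV. complex_of_real (A$i$j) * v$j) = \<mu> *s v"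
    using eigenvalue_cmat_of[OF h] by blast
  with assms(2) have "cmod \<mu> < 1" unfolding schur_stable_def by blast
  with \<mu>(2) show ?thesis by simp
qed

lemma schur_stable_matpow_decay:
  fixes A :: "real^'n^'n"
  assumes "schur_stable A"
  obtains c \<rho> where "0 \<le> c" "0 \<le> \<rho>" "\<rho> < 1" "\<And>k y. norm (matpow A k *v y) \<le> c * \<rho> ^ k * norm y"
proof -
  obtain h :: "'n \<Rightarrow> nat" where h: "bij_betw h UNIV {0..<CARD('n)}"
    using ex_bij_betw_finite_nat[of "UNIV::'n set"] by auto
  define C where "C = cmat_of h A"
  define \<rho> where "\<rho> = (1 + spectral_radius C) / 2"
  have "spectral_radius C \<in> cmod ` spectrum C"
    unfolding C_def by (rule spectral_radius_mem_max(1)[OF cmat_of_carrier]) simp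
  hence sr: "0 \<le> spectral_radius C" by auto
  have sr1: "spectral_radius C < 1"
    unfolding C_def by (rule schur_stable_spectral_radius_less_1[OF h assms])
  have "C \<in> carrier_mat CARD('n) CARD('n)" "spectral_radius C < \<rho>"
    using sr1 unfolding C_def \<rho>_def by simp_all
  from spectral_radius_less_imp_norm_bound_mat_pow[OF this]
  obtain c where c: "\<And>k. norm_bound (C ^\<^sub>m k) (c * \<rho> ^ k)" by blast
  have entry: "\<bar>matpow A k $ i $ j\<bar> \<le> c * \<rho> ^ k" for k i j
  proof -
    have "norm ((C ^\<^sub>m k) $$ (h i, h j)) \<le> c * \<rho> ^ k"
      using c[of k] enum_less_card[OF h] unfolding norm_bound_def C_def by simp
    thus ?thesis unfolding C_def cmat_of_pow_nth[OF h] by simp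
  qed
  have "0 \<le> c" using entry[of 0] by (metis abs_ge_zero mult_1_right order_trans power_0)
  moreover have "norm (matpow A k *v y) \<le> (real CARD('n) * real CARD('n) * c) * \<rho> ^ k * norm y" for k y
  proof -
    have "norm (matpow A k *v y) \<le> onorm ((*v) (matpow A k)) * norm y"
      by (rule onorm) simp
    also have "\<dots> \<le> (real CARD('n) * real CARD('n) * (c * \<rho> ^ k)) * norm y"
      by (intro mult_right_mono norm_ge_zero onorm_le_matrix_component entry)
    finally show ?thesis by (simp add: mult_ac)
  qed
  moreover have "0 \<le> \<rho>" "\<rho> < 1" using sr sr1 unfolding \<rho>_def by simp_all
  ultimately show ?thesis by (intro that[of "real CARD('n) * real CARD('n) * c" \<rho>]) simp_all
qed

subsection \<open>The closed loop as a driven linear system\<close>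

definition entry_abs_sum :: "real^'a^'b \<Rightarrow> real" where
  "entry_abs_sum M = (\<Sum>i\<in>UNIV. \<Sum>j\<in>UNIV. \<bar>M$i$j\<bar>)"

lemma entry_abs_sum_nonneg: "0 \<le> entry_abs_sum M"
  by (simp add: entry_abs_sum_def sum_nonneg)

lemma norm_matrix_vector_mult_le: "norm (M *v v) \<le> entry_abs_sum M * norm v"
  using onorm[OF matrix_vector_mul_bounded_linear, of M v] onorm_le_matrix_component_sum[of M]
  unfolding entry_abs_sum_def by (meson mult_right_mono norm_ge_zero order_trans)

lemma abs_pol_input_nth_le:
  assumes adm: "admissible N \<phi>max Umax G d" and l: "l < N"
    and \<phi>: "\<And>i j s. i < N \<Longrightarrow> \<bar>\<phi> i j s\<bar> \<le> \<phi>max"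
  shows "\<bar>pol_input \<phi> F G d ws l $ j\<bar> \<le> Umax"
proof -
  let ?y = "\<lambda>i. phi_vec \<phi> F i (ws i)"
  have "\<bar>pol_input \<phi> F G d ws l $ j\<bar> = \<bar>(\<Sum>i<l. \<Sum>k\<in>UNIV. G l i $ j $ k * ?y i $ k) + d l $ j\<bar>"
    by (simp add: pol_input_def matrix_vector_mult_def sum_component)
  also have "\<dots> \<le> (\<Sum>i<l. \<Sum>k\<in>UNIV. \<bar>G l i $ j $ k * ?y i $ k\<bar>) + \<bar>d l $ j\<bar>"
    by (intro order_trans[OF abs_triangle_ineq] add_right_mono
        order_trans[OF sum_abs sum_mono[OF sum_abs]])
  also have "\<dots> \<le> (\<Sum>i<l. \<Sum>k\<in>UNIV. \<bar>G l i $ j $ k\<bar> * \<phi>max) + \<bar>d l $ j\<bar>"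
    using l by (intro add_right_mono sum_mono)
      (auto simp: abs_mult phi_vec_def intro!: mult_left_mono \<phi>)
  also have "\<dots> = \<bar>d l $ j\<bar> + (\<Sum>i<l. \<Sum>k\<in>UNIV. \<bar>G l i $ j $ k\<bar>) * \<phi>max"
    by (simp add: sum_distrib_right)
  also have "\<dots> \<le> Umax" using adm l unfolding admissible_def by blast
  finally show ?thesis .
qed

lemma norm_pol_input_le:
  assumes "admissible N \<phi>max Umax G d" "l < N" "\<And>i j s. i < N \<Longrightarrow> \<bar>\<phi> i j s\<bar> \<le> \<phi>max"
  shows "norm (pol_input \<phi> F G d ws l :: real^'m) \<le> real CARD('m) * Umax"
proof -
  have "norm (pol_input \<phi> F G d ws l) \<le> (\<Sum>j\<in>UNIV. \<bar>pol_input \<phi> F G d ws l $ j\<bar>)"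
    by (rule norm_le_l1_cart)
  also have "\<dots> \<le> (\<Sum>j\<in>(UNIV::'m set). Umax)"
    by (intro sum_mono abs_pol_input_nth_le[OF assms])
  finally show ?thesis by simp
qed

definition rhc_input ::
  "nat \<Rightarrow> real^'n^'n \<Rightarrow> real^'m^'n \<Rightarrow> real^'n^'n \<Rightarrow> real^'n \<Rightarrow> (nat \<Rightarrow> 'n \<Rightarrow> real \<Rightarrow> real) \<Rightarrow>
   (real^'n \<Rightarrow> (nat \<Rightarrow> nat \<Rightarrow> real^'n^'m) \<times> (nat \<Rightarrow> real^'m)) \<Rightarrow> real^'n \<Rightarrow>
   (nat \<Rightarrow> real^'n) \<Rightarrow> nat \<Rightarrow> real^'m" where
  "rhc_input N A B F r \<phi> sel x0 ws t =
     (let k = t div N; xk = rhc_block N A B F r \<phi> sel x0 ws k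
      in pol_input \<phi> F (fst (sel xk)) (snd (sel xk)) (\<lambda>i. ws (k * N + i)) (t mod N))"

lemma rhc_state_Suc:
  assumes "N \<noteq> 0"
  shows "rhc_state N A B F r \<phi> sel x0 ws (Suc t) =
    A *v rhc_state N A B F r \<phi> sel x0 ws t + B *v rhc_input N A B F r \<phi> sel x0 ws t + F *v ws t + r"
proof (cases "Suc (t mod N) = N")
  case True
  then have "Suc t div N = Suc (t div N)" "Suc t mod N = 0"
    by (simp_all add: div_Suc mod_Suc)
  moreover have "traj A B F r \<phi> G d x ws' N = traj A B F r \<phi> G d x ws' (Suc (t mod N))"
    for G d x ws' using True by simp
  ultimately show ?thesis unfolding rhc_state_def rhc_input_def by (simp add: Let_def)
next
  case False
  then have "Suc t div N = t div N" "Suc t mod N = Suc (t mod N)"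
    by (simp_all add: div_Suc mod_Suc)
  then show ?thesis unfolding rhc_state_def rhc_input_def Let_def by simp
qed

lemma rhc_state_sq_norm_le:
  fixes A :: "real^'n^'n" and B :: "real^'m^'n" and r :: "real^'n"
  assumes N: "N \<noteq> 0"
    and adm: "\<And>x. admissible N \<phi>max Umax (fst (sel x)) (snd (sel x))"
    and \<phi>: "\<And>i j s. i < N \<Longrightarrow> \<bar>\<phi> i j s\<bar> \<le> \<phi>max"
    and decay: "\<And>k y. norm (matpow A k *v y) \<le> c * \<rho> ^ k * norm y"
    and c: "0 \<le> c" and \<rho>: "0 \<le> \<rho>" "\<rho> < 1" and Umax: "0 \<le> Umax"
  defines "K \<equiv> entry_abs_sum B * (real CARD('m) * Umax) + norm r"
  shows "(norm (rhc_state N A B F r \<phi> sel x0 ws t))\<^sup>2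
    \<le> 2 * (c * norm x0 + c * K / (1 - \<rho>))\<^sup>2
      + 2 * (c * entry_abs_sum F)\<^sup>2 / (1 - \<rho>) * (\<Sum>s<t. \<rho> ^ (t - Suc s) * (norm (ws s))\<^sup>2)"
proof -
  let ?x = "rhc_state N A B F r \<phi> sel x0 ws"
  let ?u = "rhc_input N A B F r \<phi> sel x0 ws"
  let ?v = "\<lambda>t. B *v ?u t + F *v ws t + r"
  have rec: "?x (Suc t) = A *v ?x t + ?v t" for t
    using rhc_state_Suc[OF N] by (simp add: add.assoc)
  have v: "norm (?v t) \<le> K + entry_abs_sum F * norm (ws t)" for t
  proof -
    have "norm (?u t) \<le> real CARD('m) * Umax"
      using N unfolding rhc_input_def Let_def by (intro norm_pol_input_le[of N \<phi>max] adm \<phi>) simp_all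
    hence "norm (B *v ?u t) \<le> entry_abs_sum B * (real CARD('m) * Umax)"
      by (meson entry_abs_sum_nonneg mult_left_mono norm_matrix_vector_mult_le order_trans)
    moreover have "norm (?v t) \<le> norm (B *v ?u t) + norm (F *v ws t) + norm r"
      by (meson add_mono norm_triangle_ineq order_trans order_refl)
    ultimately show ?thesis
      using norm_matrix_vector_mult_le[of F "ws t"] unfolding K_def by simp
  qed
  have "0 \<le> K" unfolding K_def using Umax by (simp add: entry_abs_sum_nonneg)
  from linear_recurrence_sq_norm_le[of ?x A ?v c \<rho> K "entry_abs_sum F" "\<lambda>s. norm (ws s)",
      OF rec decay v c \<rho> this]
  show ?thesis by (simp add: rhc_state_def)
qed

lemma
  fixes X Y :: "'a \<Rightarrow> 'b::real_normed_vector"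
  assumes X: "X \<in> borel_measurable M" and Y: "Y \<in> borel_measurable M"
    and XY: "distr M borel X = distr M borel Y"
    and Y_int: "integrable M (\<lambda>\<omega>. (norm (Y \<omega>))\<^sup>2)"
  shows integrable_sq_norm_of_distr_eq: "integrable M (\<lambda>\<omega>. (norm (X \<omega>))\<^sup>2)"
    and integral_sq_norm_of_distr_eq: "(\<integral>\<omega>. (norm (X \<omega>))\<^sup>2 \<partial>M) = (\<integral>\<omega>. (norm (Y \<omega>))\<^sup>2 \<partial>M)"
proof -
  have sq: "(\<lambda>x::'b. (norm x)\<^sup>2) \<in> borel_measurable borel" by measurable
  show "integrable M (\<lambda>\<omega>. (norm (X \<omega>))\<^sup>2)"
    using integrable_distr_eq[OF X sq] integrable_distr_eq[OF Y sq] Y_int XY by simp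
  show "(\<integral>\<omega>. (norm (X \<omega>))\<^sup>2 \<partial>M) = (\<integral>\<omega>. (norm (Y \<omega>))\<^sup>2 \<partial>M)"
    using integral_distr[OF X sq] integral_distr[OF Y sq] XY by simp
qed

lemma (in prob_space) nn_integral_le_of_geometric_moment_bound:
  fixes g :: "nat \<Rightarrow> 'a \<Rightarrow> real"
  assumes f: "\<And>\<omega>. f \<omega> \<le> C0 + C1 * (\<Sum>s<t. \<rho> ^ (t - Suc s) * g s \<omega>)"
    and g_int: "\<And>s. integrable M (g s)" and g_mean: "\<And>s. (\<integral>\<omega>. g s \<omega> \<partial>M) = E"
    and g_nonneg: "\<And>s \<omega>. 0 \<le> g s \<omega>"
    and C: "0 \<le> C0" "0 \<le> C1" and \<rho>: "0 \<le> \<rho>" "\<rho> < 1"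
  shows "(\<integral>\<^sup>+ \<omega>. ennreal (f \<omega>) \<partial>M) \<le> ennreal (C0 + C1 * (E / (1 - \<rho>)))"
proof -
  let ?h = "\<lambda>\<omega>. C0 + C1 * (\<Sum>s<t. \<rho> ^ (t - Suc s) * g s \<omega>)"
  have h_int: "integrable M ?h"
    using g_int by (intro Bochner_Integration.integrable_add integrable_mult_right
        Bochner_Integration.integrable_sum) simp_all
  have E: "0 \<le> E" using g_mean[of 0] g_nonneg by (metis integral_nonneg_AE AE_I2)
  have "(\<integral>\<^sup>+ \<omega>. ennreal (f \<omega>) \<partial>M) \<le> (\<integral>\<^sup>+ \<omega>. ennreal (?h \<omega>) \<partial>M)"
    by (intro nn_integral_mono ennreal_leI f)
  also have "\<dots> = ennreal (\<integral>\<omega>. ?h \<omega> \<partial>M)"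
    using h_int C \<rho> g_nonneg by (intro nn_integral_eq_integral AE_I2 add_nonneg_nonneg
        mult_nonneg_nonneg sum_nonneg) simp_all
  also have "(\<integral>\<omega>. ?h \<omega> \<partial>M) = C0 + C1 * ((\<Sum>s<t. \<rho> ^ (t - Suc s)) * E)"
    using g_int g_mean by (simp add: Bochner_Integration.integral_sum sum_distrib_right prob_space)
  also have "C0 + C1 * ((\<Sum>s<t. \<rho> ^ (t - Suc s)) * E) \<le> C0 + C1 * (E / (1 - \<rho>))"
    using mult_right_mono[OF sum_geometric_tail_le[OF \<rho>, of t] E] C
    by (intro add_left_mono mult_left_mono) simp_all
  finally show ?thesis by (simp add: ennreal_leI)
qed

theorem proposition4:
  fixes M :: "'a measure"
    and w :: "nat \<Rightarrow> 'a \<Rightarrow> real^'n"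
    and A :: "real^'n^'n" and B :: "real^'m^'n" and F :: "real^'n^'n" and r :: "real^'n"
    and x0 :: "real^'n" and N :: nat and Umax \<phi>max :: real
    and \<phi> :: "nat \<Rightarrow> 'n \<Rightarrow> real \<Rightarrow> real"
    and Q :: "nat \<Rightarrow> real^'n^'n" and R :: "nat \<Rightarrow> real^'m^'m"
    and sel :: "real^'n \<Rightarrow> (nat \<Rightarrow> nat \<Rightarrow> real^'n^'m) \<times> (nat \<Rightarrow> real^'m)"
  assumes prob: "prob_space M"
    and w_meas: "\<And>t. w t \<in> borel_measurable M"
    and w_indep: "prob_space.indep_vars M (\<lambda>_. borel) w UNIV"
    and w_ident: "\<And>t. distr M borel (w t) = distr M borel (w 0)"
    and w_cov: "integrable M (\<lambda>\<omega>. (norm (w 0 \<omega>))\<^sup>2)"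
    and N_pos: "N \<ge> 1"
    and Umax_pos: "0 < Umax"
    and phimax: "0 < \<phi>max" "\<phi>max \<le> Umax"
    and phi_bound: "\<And>i j s. i < N \<Longrightarrow> \<bar>\<phi> i j s\<bar> \<le> \<phi>max"
    and phi_meas: "\<And>i j. i < N \<Longrightarrow> \<phi> i j \<in> borel_measurable borel"
    and Q_pd: "\<And>k. k \<le> N \<Longrightarrow> sym_pos_def (Q k)"
    and R_pd: "\<And>k. k < N \<Longrightarrow> sym_pos_def (R k)"
    and sel_opt: "\<And>x. fh_optimal M w N A B F r \<phi> Q R \<phi>max Umax x (fst (sel x)) (snd (sel x))"
    and schur: "schur_stable A"
    and zero_mean: "\<And>i j. i < N \<Longrightarrow> (\<integral>\<omega>. \<phi> i j ((F *v w i \<omega>) $ j) \<partial>M) = 0"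
    and state_meas: "\<And>t. (\<lambda>\<omega>. rhc_state N A B F r \<phi> sel x0 (\<lambda>i. w i \<omega>) t) \<in> borel_measurable M"
  shows "(SUP t. \<integral>\<^sup>+ \<omega>. ennreal ((norm (rhc_state N A B F r \<phi> sel x0 (\<lambda>i. w i \<omega>) t))\<^sup>2) \<partial>M) < \<infinity>"
proof -
  interpret prob_space M by (rule prob)
  obtain c \<rho> where c: "0 \<le> c" and \<rho>: "0 \<le> \<rho>" "\<rho> < 1"
    and decay: "\<And>k y. norm (matpow A k *v y) \<le> c * \<rho> ^ k * norm y"
    using schur_stable_matpow_decay[OF schur] by blast
  have adm: "\<And>x. admissible N \<phi>max Umax (fst (sel x)) (snd (sel x))"
    using sel_opt unfolding fh_optimal_def by blast
  define K where "K = entry_abs_sum B * (real CARD('m) * Umax) + norm r"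
  define C0 where "C0 = 2 * (c * norm x0 + c * K / (1 - \<rho>))\<^sup>2"
  define C1 where "C1 = 2 * (c * entry_abs_sum F)\<^sup>2 / (1 - \<rho>)"
  define E where "E = (\<integral>\<omega>. (norm (w 0 \<omega>))\<^sup>2 \<partial>M)"
  have bound: "(\<integral>\<^sup>+ \<omega>. ennreal ((norm (rhc_state N A B F r \<phi> sel x0 (\<lambda>i. w i \<omega>) t))\<^sup>2) \<partial>M)
      \<le> ennreal (C0 + C1 * (E / (1 - \<rho>)))" for t
  proof (rule nn_integral_le_of_geometric_moment_bound)
    show "(norm (rhc_state N A B F r \<phi> sel x0 (\<lambda>i. w i \<omega>) t))\<^sup>2
        \<le> C0 + C1 * (\<Sum>s<t. \<rho> ^ (t - Suc s) * (norm (w s \<omega>))\<^sup>2)" for \<omega>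
      unfolding C0_def C1_def K_def
      by (rule rhc_state_sq_norm_le[OF _ adm phi_bound decay c \<rho>]) (use N_pos Umax_pos in simp_all)
    show "integrable M (\<lambda>\<omega>. (norm (w s \<omega>))\<^sup>2)" "(\<integral>\<omega>. (norm (w s \<omega>))\<^sup>2 \<partial>M) = E" for s
      unfolding E_def using w_meas w_ident w_cov
      by (auto intro: integrable_sq_norm_of_distr_eq integral_sq_norm_of_distr_eq)
    show "0 \<le> C0" "0 \<le> C1" unfolding C0_def C1_def using \<rho> by simp_all
  qed (use \<rho> in simp_all)
  have "(SUP t. \<integral>\<^sup>+ \<omega>. ennreal ((norm (rhc_state N A B F r \<phi> sel x0 (\<lambda>i. w i \<omega>) t))\<^sup>2) \<partial>M)
      \<le> ennreal (C0 + C1 * (E / (1 - \<rho>)))"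
    by (rule SUP_least) (rule bound)
  also have "\<dots> < \<infinity>" by simp
  finally show ?thesis .
qed

end
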